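(* Let $1\le m<n$ be integers and let $c_1,\dots,c_m$ be non-negative integers satisfying $c_1+2c_2+\cdots+mc_m\le n-m-1$. Let $\pi\in S_n$ be chosen uniformly at random, and let $c_i(\pi)$ denote the number of cycles of length $i$ in $\pi$. Then \[ \frac{1}{(2m+2)\prod_{i=1}^m c_i!\, i^{c_i}} \le \mathbb{P}\big(c_1(\pi)=c_1,\dots,c_m(\pi)=c_m\big) \le \frac{1}{(m+1)\prod_{i=1}^m c_i!\, i^{c_i}}. \]
   Context: $S_n$ is the symmetric group on $\{1,\dots,n\}$. *)

theory Defs
  imports "HOL-Combinatorics.Combinatorics" Complex_Main
begin

definition cyc_count :: "nat \<Rightarrow> (nat \<Rightarrow> nat) \<Rightarrow> nat \<Rightarrow> nat" where
  "cyc_count n p i = card {orbit p x | x. x \<in> {1..n} \<and> card (orbit p x) = i}"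

definition sym_prob :: "nat \<Rightarrow> ((nat \<Rightarrow> nat) \<Rightarrow> bool) \<Rightarrow> real" where
  "sym_prob n P = real (card {p. p permutes {1..n} \<and> P p}) / real (card {p. p permutes {1..n}})"

end

theory Submission
  imports Defs
begin

text \<open>
  A permutation of \<open>S \<union> {a}\<close> is uniquely of the form \<open>(a b) \<circ> p\<close> with \<open>p\<close> a permutation
  of \<open>S\<close> and \<open>b \<in> S \<union> {a}\<close>: it arises from \<open>p\<close> by inserting \<open>a\<close> in front of \<open>b\<close>, so its
  cycles are those of \<open>p\<close> except that the cycle through \<open>b\<close>, of length \<open>l\<close> say, grows to
  length \<open>l + 1\<close> (for \<open>b = a\<close>, \<open>a\<close> becomes a new fixed point). Counting the insertions that
  produce prescribed numbers \<open>c\<^sub>i\<close> of \<open>i\<close>-cycles for \<open>i \<le> m\<close> gives a recurrence for the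
  number \<open>N\<^sub>n(c)\<close> of permutations of \<open>n\<close> points with these cycle counts, solved by
  \<open>N\<^sub>n(c) * \<Prod>\<^sub>i c\<^sub>i! i^c\<^sub>i = n! * d\<^sub>m(n - \<Sum>\<^sub>i i c\<^sub>i)\<close>, where
  \<open>(k + 1) d\<^sub>m(k + 1) = k d\<^sub>m(k) + d\<^sub>m(k - m)\<close>. This recurrence forces \<open>k d\<^sub>m(k) = 1\<close> for
  \<open>m < k \<le> 2m + 1\<close>, and then induction on \<open>k\<close> gives \<open>1/(2m + 2) \<le> d\<^sub>m(k) \<le> 1/(m + 1)\<close>
  for all \<open>k > m\<close>.
\<close>

section \<open>Inserting a point into a permutation\<close>

lemma orbit_eq_if_mem_orbit:
  assumes "permutation f" "x \<in> orbit f y"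
  shows "orbit f x = orbit f y"
  using assms cyclic_on_orbit' orbit_cyclic_eq3 by metis

lemma permutation_transpose_compose:
  assumes "p permutes S" "finite S" "b \<in> insert a S"
  shows "permutation (transpose a b \<circ> p)"
proof -
  have "transpose a b \<circ> p permutes insert a S"
    using assms by (intro permutes_compose permutes_swap_id permutes_subset[OF assms(1)]) auto
  then show ?thesis using assms(2) permutation_permutes by blast
qed

lemma orbit_transpose_compose_new_point:
  assumes p: "p permutes S" and fin: "finite S" and a: "a \<notin> S" and b: "b \<in> S"
  shows "orbit (transpose a b \<circ> p) a = insert a (orbit p b)"
proof -
  let ?q = "transpose a b \<circ> p"
  have orbit_S: "orbit p b \<subseteq> S" using permutes_orbit_subset[OF p b] .
  have b_orbit: "b \<in> orbit p b"
    using p fin permutation_permutes permutation_self_in_orbit by metis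
  have qa: "?q a = b" using permutes_not_in[OF p a] by simp
  have q_on_orbit: "?q y = (if p y = b then a else p y)" if "y \<in> orbit p b" for y
  proof -
    have "p y \<in> orbit p b" using that by (rule orbit.step)
    then have "p y \<noteq> a" using orbit_S a by blast
    then show ?thesis by (simp add: transpose_def)
  qed
  have b_qorbit: "b \<in> orbit ?q a" using qa orbit.base by metis
  have p_step: "p y \<in> orbit ?q a" if "y \<in> orbit p b" "y \<in> orbit ?q a" for y
  proof (cases "p y = b")
    case False
    then show ?thesis using q_on_orbit[OF that(1)] orbit.step[OF that(2)] by simp
  qed (use b_qorbit in simp)
  have q_closed: "?q y \<in> insert a (orbit p b)" if "y \<in> insert a (orbit p b)" for y
    using that qa b_orbit q_on_orbit orbit.step[of _ p b] by auto
  show ?thesis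
  proof
    show "orbit ?q a \<subseteq> insert a (orbit p b)"
    proof
      fix y assume "y \<in> orbit ?q a"
      then show "y \<in> insert a (orbit p b)"
        by induction (use qa b_orbit q_closed in auto)
    qed
    have "y \<in> orbit ?q a" if "y \<in> orbit p b" for y
      using that
    proof induction
      case base
      show ?case using p_step[OF b_orbit b_qorbit] .
    next
      case (step y)
      show ?case using p_step[OF step] .
    qed
    moreover have "a \<in> orbit ?q a"
      using permutation_transpose_compose[OF p fin] b by (simp add: permutation_self_in_orbit)
    ultimately show "insert a (orbit p b) \<subseteq> orbit ?q a" by blast
  qed
qed

lemma orbit_transpose_compose_other_point:
  assumes p: "p permutes S" and fin: "finite S" and a: "a \<notin> S" and b: "b \<in> S"
    and x: "x \<in> S" "x \<notin> orbit p b"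
  shows "orbit (transpose a b \<circ> p) x = orbit p x"
proof (rule orbit_cong)
  have perm: "permutation p" using p fin permutation_permutes by blast
  then show "x \<in> orbit p x" by (rule permutation_self_in_orbit)
  have "b \<notin> orbit p x"
    using x(2) orbit_eq_if_mem_orbit[OF perm] permutation_self_in_orbit[OF perm] by blast
  moreover have "orbit p x \<subseteq> S" using permutes_orbit_subset[OF p x(1)] .
  moreover fix y assume "y \<in> orbit p x"
  then have "p y \<in> orbit p x" by (rule orbit.step)
  ultimately show "(transpose a b \<circ> p) y = p y" using a by (auto simp: transpose_def)
qed

text \<open>\<open>(a b) \<circ> p\<close> maps the predecessor of \<open>b\<close> to \<open>a\<close> and \<open>a\<close> to \<open>b\<close>, so it inserts \<open>a\<close> into
  this cycle of \<open>p\<close>.\<close>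

definition host_cycle :: "'a \<Rightarrow> ('a \<Rightarrow> 'a) \<Rightarrow> 'a \<Rightarrow> 'a set" where
  "host_cycle a p b = (if b = a then {} else orbit p b)"

lemma host_cycle_subset:
  assumes "p permutes S" "b \<in> insert a S"
  shows "host_cycle a p b \<subseteq> S"
  using assms permutes_orbit_subset[OF assms(1)] by (auto simp: host_cycle_def)

lemma orbit_transpose_compose:
  assumes p: "p permutes S" and fin: "finite S" and a: "a \<notin> S" and b: "b \<in> insert a S"
    and x: "x \<in> insert a S"
  defines "C \<equiv> insert a (host_cycle a p b)"
  shows "orbit (transpose a b \<circ> p) x = (if x \<in> C then C else orbit p x)"
proof (cases "b = a")
  case True
  then show ?thesis
    using permutes_not_in[OF p a] orbit_eq_singleton_iff[of p a] by (simp add: C_def host_cycle_def)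
next
  case False
  then have bS: "b \<in> S" using b by simp
  have C: "C = orbit (transpose a b \<circ> p) a"
    using orbit_transpose_compose_new_point[OF p fin a bS] False by (simp add: C_def host_cycle_def)
  show ?thesis
  proof (cases "x \<in> C")
    case True
    then show ?thesis
      using C orbit_eq_if_mem_orbit[OF permutation_transpose_compose[OF p fin b]] by metis
  next
    case False
    then show ?thesis
      using orbit_transpose_compose_other_point[OF p fin a bS] x \<open>b \<noteq> a\<close>
      by (simp add: C_def host_cycle_def)
  qed
qed

lemma card_permutes_insert_filter:
  assumes "finite S" "a \<notin> S"
  shows "card {q. q permutes insert a S \<and> P q} =
    (\<Sum>p | p permutes S. card {b \<in> insert a S. P (transpose a b \<circ> p)})"
proof -
  have "card {q. q permutes insert a S \<and> P q} = (\<Sum>q | q permutes insert a S. of_bool (P q))"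
    using finite_permutations[of "insert a S"] assms(1) by (simp add: Collect_conj_eq)
  also have "\<dots> = (\<Sum>b\<in>insert a S. \<Sum>p | p permutes S. of_bool (P (transpose a b \<circ> p)))"
    by (rule sum_over_permutations_insert[OF assms])
  also have "\<dots> = (\<Sum>p | p permutes S. \<Sum>b\<in>insert a S. of_bool (P (transpose a b \<circ> p)))"
    by (rule sum.swap)
  also have "\<dots> = (\<Sum>p | p permutes S. card {b \<in> insert a S. P (transpose a b \<circ> p)})"
  proof -
    have "(\<Sum>b\<in>A. of_bool (Q b)) = card {b\<in>A. Q b}" if "finite A" for A :: "'a set" and Q
      using that by (simp add: Collect_conj_eq)
    then show ?thesis by (intro sum.cong refl) (simp add: assms(1))
  qed
  finally show ?thesis .
qed

lemma card_filter_split: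
  assumes "finite A" "B \<subseteq> A"
  shows "card {x\<in>A. P x} = card {x\<in>B. P x} + card {x\<in>A - B. P x}"
proof -
  have "{x\<in>A. P x} = {x\<in>B. P x} \<union> {x\<in>A - B. P x}" using assms(2) by blast
  also have "card \<dots> = card {x\<in>B. P x} + card {x\<in>A - B. P x}"
    using assms finite_subset[OF assms(2,1)] by (intro card_Un_disjoint) auto
  finally show ?thesis .
qed

lemma card_filter_split_at:
  fixes g :: "'a \<Rightarrow> nat"
  assumes "finite A"
  shows "card {b\<in>A. P (g b)} =
    (\<Sum>l\<le>m. of_bool (P l) * card {b\<in>A. g b = l}) + card {b\<in>A. m < g b \<and> P (g b)}"
proof -
  have "{b\<in>A. P (g b)} = (\<Union>l\<le>m. {b\<in>A. P l \<and> g b = l}) \<union> {b\<in>A. m < g b \<and> P (g b)}"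
    by (auto simp: not_le)
  also have "card \<dots> = card (\<Union>l\<le>m. {b\<in>A. P l \<and> g b = l}) + card {b\<in>A. m < g b \<and> P (g b)}"
    using assms by (intro card_Un_disjoint) auto
  also have "card (\<Union>l\<le>m. {b\<in>A. P l \<and> g b = l}) = (\<Sum>l\<le>m. card {b\<in>A. P l \<and> g b = l})"
    using assms by (intro card_UN_disjoint) auto
  also have "\<dots> = (\<Sum>l\<le>m. of_bool (P l) * card {b\<in>A. g b = l})"
    by (intro sum.cong) auto
  finally show ?thesis .
qed

lemma card_orbit_pos:
  assumes "p permutes S" "finite S" "b \<in> S"
  shows "0 < card (orbit p b)"
  using orbit_nonempty[of p b] finite_subset[OF permutes_orbit_subset[OF assms(1,3)] assms(2)]
  by (simp add: card_gt_0_iff)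

definition cycle_points :: "'a set \<Rightarrow> ('a \<Rightarrow> 'a) \<Rightarrow> nat \<Rightarrow> nat" where
  "cycle_points S p i = card {x\<in>S. card (orbit p x) = i}"

lemma card_orbits_of_size:
  assumes p: "p permutes S" and fin: "finite S"
  shows "i * card {orbit p x | x. x \<in> S \<and> card (orbit p x) = i} = cycle_points S p i"
proof -
  let ?C = "{orbit p x | x. x \<in> S \<and> card (orbit p x) = i}"
  have perm: "permutation p" using p fin permutation_permutes by blast
  have union: "\<Union>?C = {x\<in>S. card (orbit p x) = i}"
  proof
    show "\<Union>?C \<subseteq> {x\<in>S. card (orbit p x) = i}"
    proof
      fix y assume "y \<in> \<Union>?C"
      then obtain x where x: "x \<in> S" "card (orbit p x) = i" "y \<in> orbit p x" by blast
      then show "y \<in> {x\<in>S. card (orbit p x) = i}"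
        using orbit_eq_if_mem_orbit[OF perm x(3)] permutes_orbit_subset[OF p x(1)] by auto
    qed
    show "{x\<in>S. card (orbit p x) = i} \<subseteq> \<Union>?C"
      using permutation_self_in_orbit[OF perm] by blast
  qed
  have "finite ?C"
    by (rule finite_subset[of _ "Pow S"]) (use permutes_orbit_subset[OF p] fin in auto)
  moreover have "c1 \<inter> c2 = {}" if C: "c1 \<in> ?C" "c2 \<in> ?C" "c1 \<noteq> c2" for c1 c2
  proof -
    obtain x1 x2 where c: "c1 = orbit p x1" "c2 = orbit p x2" using C(1,2) by blast
    have "orbit p x1 = orbit p x2" if "y \<in> orbit p x1" "y \<in> orbit p x2" for y
      using orbit_eq_if_mem_orbit[OF perm that(1)] orbit_eq_if_mem_orbit[OF perm that(2)] by simp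
    then show ?thesis using c \<open>c1 \<noteq> c2\<close> by blast
  qed
  ultimately have "i * card ?C = card (\<Union>?C)"
    by (intro card_partition) (use union fin in auto)
  then show ?thesis unfolding union cycle_points_def .
qed

lemma cycle_points_transpose_compose:
  assumes p: "p permutes S" and fin: "finite S" and a: "a \<notin> S" and b: "b \<in> insert a S"
  defines "l \<equiv> card (host_cycle a p b)"
  shows "cycle_points (insert a S) (transpose a b \<circ> p) i + (if i = l then l else 0)
       = cycle_points S p i + (if i = Suc l then Suc l else 0)"
proof -
  define H where "H = host_cycle a p b"
  let ?q = "transpose a b \<circ> p"
  let ?R = "{x \<in> S - H. card (orbit p x) = i}"
  have HS: "H \<subseteq> S" using host_cycle_subset[OF p b] by (simp add: H_def)
  then have finH: "finite H" and aH: "a \<notin> H" using fin a finite_subset by auto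
  have card_aH: "card (insert a H) = Suc l" using finH aH by (simp add: l_def H_def)
  have orbit_q: "orbit ?q x = (if x \<in> insert a H then insert a H else orbit p x)" if "x \<in> insert a S" for x
    using orbit_transpose_compose[OF p fin a b that] by (simp add: H_def)
  have perm: "permutation p" using p fin permutation_permutes by blast
  have orbit_H: "card (orbit p x) = l" if "x \<in> H" for x
    using that orbit_eq_if_mem_orbit[OF perm, of x b]
    by (auto simp: l_def H_def host_cycle_def split: if_splits)
  have "cycle_points (insert a S) ?q i
      = card {x \<in> insert a H. card (orbit ?q x) = i} + card {x \<in> insert a S - insert a H. card (orbit ?q x) = i}"
    unfolding cycle_points_def by (rule card_filter_split) (use fin HS in auto)
  also have "{x \<in> insert a H. card (orbit ?q x) = i} = {x \<in> insert a H. Suc l = i}"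
    using orbit_q HS card_aH by auto
  also have "{x \<in> insert a S - insert a H. card (orbit ?q x) = i} = ?R"
    using orbit_q a by auto
  also have "{x \<in> insert a H. Suc l = i} = (if i = Suc l then insert a H else {})"
    by auto
  also have "card \<dots> = (if i = Suc l then Suc l else 0)"
    using card_aH by simp
  finally have q_points: "cycle_points (insert a S) ?q i = (if i = Suc l then Suc l else 0) + card ?R" .
  have "cycle_points S p i = card {x \<in> H. card (orbit p x) = i} + card ?R"
    unfolding cycle_points_def by (rule card_filter_split) (use fin HS in auto)
  also have "{x \<in> H. card (orbit p x) = i} = {x \<in> H. l = i}" using orbit_H by auto
  also have "card {x \<in> H. l = i} = (if i = l then l else 0)"
    by (simp add: l_def H_def)
  finally have p_points: "cycle_points S p i = (if i = l then l else 0) + card ?R" .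
  show ?thesis using q_points p_points by simp
qed

lemma card_host_cycle_eq:
  assumes p: "p permutes S" and fin: "finite S" and a: "a \<notin> S"
  shows "card {b \<in> insert a S. card (host_cycle a p b) = l} = (if l = 0 then 1 else cycle_points S p l)"
proof -
  have "{b \<in> insert a S. card (host_cycle a p b) = l} = (if l = 0 then {a} else {b\<in>S. card (orbit p b) = l})"
    using a by (auto simp: host_cycle_def dest: card_orbit_pos[OF p fin])
  then show ?thesis by (simp add: cycle_points_def)
qed

lemma sum_cycle_points_add_long:
  assumes p: "p permutes S" and fin: "finite S"
  shows "(\<Sum>i=1..m. cycle_points S p i) + card {b\<in>S. m < card (orbit p b)} = card S"
proof -
  have "card {b\<in>S. True} = (\<Sum>l\<le>m. cycle_points S p l) + card {b\<in>S. m < card (orbit p b)}"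
    using card_filter_split_at[OF fin, of "\<lambda>_. True" "\<lambda>b. card (orbit p b)" m]
    by (simp add: cycle_points_def)
  moreover have "{b\<in>S. card (orbit p b) = 0} = {}"
    by (auto dest: card_orbit_pos[OF p fin])
  ultimately show ?thesis by (simp add: atMost_atLeast0 sum.atLeast_Suc_atMost cycle_points_def)
qed

section \<open>The insertion recurrence\<close>

text \<open>Having \<open>c i\<close> cycles of length \<open>i\<close> is stated as having \<open>i * c i\<close> points on such cycles,
  a quantity that changes additively under insertion.\<close>

definition has_short_cycle_counts :: "nat \<Rightarrow> 'a set \<Rightarrow> ('a \<Rightarrow> 'a) \<Rightarrow> (nat \<Rightarrow> nat) \<Rightarrow> bool" where
  "has_short_cycle_counts m S p c \<longleftrightarrow> (\<forall>i\<in>{1..m}. cycle_points S p i = i * c i)"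

text \<open>The cycle counts of \<open>p\<close> when \<open>(a b) \<circ> p\<close> has counts \<open>c\<close> and \<open>a\<close> went into a cycle of
  length \<open>l\<close>. If \<open>c (Suc l) = 0\<close>, the truncated subtraction makes this junk; that case is
  excluded by a separate side condition.\<close>

definition type_before_insert :: "(nat \<Rightarrow> nat) \<Rightarrow> nat \<Rightarrow> nat \<Rightarrow> nat" where
  "type_before_insert c l = c(Suc l := c (Suc l) - 1, l := Suc (c l))"

lemma eq_mult_iff_type_before_insert:
  assumes E: "e' + (if i = l then l else 0) = e + (if i = Suc l then Suc l else 0)"
    and i: "1 \<le> i"
  shows "e' = i * c i \<longleftrightarrow> (i = Suc l \<longrightarrow> c i \<noteq> 0) \<and> e = i * type_before_insert c l i"
proof (cases "i = Suc l")
  case True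
  then show ?thesis using E i by (cases "c i") (auto simp: type_before_insert_def)
qed (use E in \<open>auto simp: type_before_insert_def\<close>)

lemma has_short_cycle_counts_transpose_compose:
  assumes p: "p permutes S" and fin: "finite S" and a: "a \<notin> S" and b: "b \<in> insert a S"
  defines "l \<equiv> card (host_cycle a p b)"
  shows "has_short_cycle_counts m (insert a S) (transpose a b \<circ> p) c \<longleftrightarrow>
         (Suc l \<le> m \<longrightarrow> c (Suc l) \<noteq> 0) \<and> has_short_cycle_counts m S p (type_before_insert c l)"
proof -
  have "cycle_points (insert a S) (transpose a b \<circ> p) i = i * c i \<longleftrightarrow>
        (i = Suc l \<longrightarrow> c i \<noteq> 0) \<and> cycle_points S p i = i * type_before_insert c l i"
    if "i \<in> {1..m}" for i
    using eq_mult_iff_type_before_insert[OF cycle_points_transpose_compose[OF p fin a b, of i]] that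
    by (simp add: l_def)
  then show ?thesis unfolding has_short_cycle_counts_def by auto
qed

definition type_size :: "nat \<Rightarrow> (nat \<Rightarrow> nat) \<Rightarrow> nat" where
  "type_size m c = (\<Sum>i=1..m. i * c i)"

text \<open>The number of \<open>b\<close> inserting the new point into an \<open>l\<close>-cycle of a permutation with
  counts \<open>type_before_insert c l\<close> (for \<open>l = 0\<close>, only \<open>b = a\<close>).\<close>

definition insert_positions :: "(nat \<Rightarrow> nat) \<Rightarrow> nat \<Rightarrow> nat" where
  "insert_positions c l = (if l = 0 then 1 else l * Suc (c l))"

lemma card_insertions_with_short_cycle_counts:
  assumes p: "p permutes S" and fin: "finite S" and a: "a \<notin> S"
  shows "card {b \<in> insert a S. has_short_cycle_counts m (insert a S) (transpose a b \<circ> p) c}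
    = (\<Sum>l\<le>m. insert_positions c l * of_bool ((Suc l \<le> m \<longrightarrow> c (Suc l) \<noteq> 0) \<and>
                   has_short_cycle_counts m S p (type_before_insert c l)))
      + (card S - type_size m c) * of_bool (has_short_cycle_counts m S p c)"
proof -
  define g where "g b = card (host_cycle a p b)" for b
  define P where "P l \<longleftrightarrow> (Suc l \<le> m \<longrightarrow> c (Suc l) \<noteq> 0) \<and>
    has_short_cycle_counts m S p (type_before_insert c l)" for l
  let ?A = "insert a S"
  have "{b \<in> ?A. has_short_cycle_counts m ?A (transpose a b \<circ> p) c} = {b \<in> ?A. P (g b)}"
    using has_short_cycle_counts_transpose_compose[OF p fin a] by (auto simp: P_def g_def)
  then have "card {b \<in> ?A. has_short_cycle_counts m ?A (transpose a b \<circ> p) c}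
      = (\<Sum>l\<le>m. of_bool (P l) * card {b\<in>?A. g b = l}) + card {b\<in>?A. m < g b \<and> P (g b)}"
    using card_filter_split_at[of ?A P g m] fin by simp
  also have "(\<Sum>l\<le>m. of_bool (P l) * card {b\<in>?A. g b = l}) = (\<Sum>l\<le>m. insert_positions c l * of_bool (P l))"
  proof (rule sum.cong[OF refl])
    fix l assume "l \<in> {..m}"
    then have "cycle_points S p l = l * Suc (c l)" if "P l" "l \<noteq> 0"
      using that by (auto simp: P_def has_short_cycle_counts_def type_before_insert_def)
    then show "of_bool (P l) * card {b\<in>?A. g b = l} = insert_positions c l * of_bool (P l)"
      using card_host_cycle_eq[OF p fin a, of l] by (auto simp: g_def insert_positions_def)
  qed
  also have "card {b\<in>?A. m < g b \<and> P (g b)} = (card S - type_size m c) * of_bool (has_short_cycle_counts m S p c)"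
  proof -
    have "P l \<longleftrightarrow> has_short_cycle_counts m S p c" if "m < l" for l
      using that by (auto simp: P_def has_short_cycle_counts_def type_before_insert_def)
    then have "{b\<in>?A. m < g b \<and> P (g b)} =
        (if has_short_cycle_counts m S p c then {b\<in>S. m < card (orbit p b)} else {})"
      using a by (auto simp: g_def host_cycle_def)
    moreover have "card {b\<in>S. m < card (orbit p b)} = card S - type_size m c"
      if "has_short_cycle_counts m S p c"
    proof -
      have "(\<Sum>i=1..m. cycle_points S p i) = type_size m c"
        using that by (auto simp: has_short_cycle_counts_def type_size_def intro: sum.cong)
      then show ?thesis using sum_cycle_points_add_long[OF p fin, of m] by simp
    qed
    ultimately show ?thesis by simp
  qed
  finally show ?thesis unfolding P_def .
qed

definition perms_with_short_cycle_counts :: "nat \<Rightarrow> 'a set \<Rightarrow> (nat \<Rightarrow> nat) \<Rightarrow> nat" where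
  "perms_with_short_cycle_counts m S c = card {p. p permutes S \<and> has_short_cycle_counts m S p c}"

lemma perms_with_short_cycle_counts_insert:
  assumes fin: "finite S" and a: "a \<notin> S"
  shows "perms_with_short_cycle_counts m (insert a S) c =
    (\<Sum>l\<le>m. insert_positions c l * of_bool (Suc l \<le> m \<longrightarrow> c (Suc l) \<noteq> 0) *
       perms_with_short_cycle_counts m S (type_before_insert c l))
    + (card S - type_size m c) * perms_with_short_cycle_counts m S c"
proof -
  let ?N = "perms_with_short_cycle_counts m S"
  let ?C = "\<lambda>l. Suc l \<le> m \<longrightarrow> c (Suc l) \<noteq> 0"
  have count: "?N d = (\<Sum>p | p permutes S. of_bool (has_short_cycle_counts m S p d))" for d
    using finite_permutations[OF fin] by (simp add: perms_with_short_cycle_counts_def Collect_conj_eq)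
  have "perms_with_short_cycle_counts m (insert a S) c =
      (\<Sum>p | p permutes S. card {b \<in> insert a S. has_short_cycle_counts m (insert a S) (transpose a b \<circ> p) c})"
    unfolding perms_with_short_cycle_counts_def by (rule card_permutes_insert_filter[OF fin a])
  also have "\<dots> = (\<Sum>p | p permutes S.
      (\<Sum>l\<le>m. insert_positions c l * of_bool (?C l) * of_bool (has_short_cycle_counts m S p (type_before_insert c l)))
      + (card S - type_size m c) * of_bool (has_short_cycle_counts m S p c))"
    using card_insertions_with_short_cycle_counts[OF _ fin a] by (simp add: of_bool_conj mult.assoc)
  also have "\<dots> = (\<Sum>l\<le>m. insert_positions c l * of_bool (?C l) * ?N (type_before_insert c l))
      + (card S - type_size m c) * ?N c"
    unfolding count sum.distrib sum_distrib_left by (subst sum.swap) (rule refl)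
  finally show ?thesis .
qed

definition type_weight :: "nat \<Rightarrow> (nat \<Rightarrow> nat) \<Rightarrow> real" where
  "type_weight m c = (\<Prod>i=1..m. fact (c i) * real i ^ c i)"

lemma type_weight_upd_outside:
  "l \<notin> {1..m} \<Longrightarrow> type_weight m (c(l := v)) = type_weight m c"
  unfolding type_weight_def by (intro prod.cong) auto

lemma type_size_upd_outside:
  "l \<notin> {1..m} \<Longrightarrow> type_size m (c(l := v)) = type_size m c"
  unfolding type_size_def by (intro sum.cong) auto

lemma type_weight_upd_Suc:
  assumes l: "l \<in> {1..m}"
  shows "type_weight m (c(l := Suc (c l))) = real (Suc (c l)) * real l * type_weight m c"
proof -
  let ?R = "\<lambda>d. \<Prod>i\<in>{1..m} - {l}. fact (d i) * real i ^ d i"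
  have split: "type_weight m d = fact (d l) * real l ^ d l * ?R d" for d
    using l by (simp add: type_weight_def prod.remove)
  have "?R (c(l := Suc (c l))) = ?R c" by (intro prod.cong) auto
  then show ?thesis unfolding split[of "c(l := Suc (c l))"] split[of c] by simp
qed

lemma type_size_upd_Suc:
  assumes l: "l \<in> {1..m}"
  shows "type_size m (c(l := Suc (c l))) = type_size m c + l"
proof -
  let ?R = "\<lambda>d. \<Sum>i\<in>{1..m} - {l}. i * d i"
  have split: "type_size m d = l * d l + ?R d" for d
    using l by (simp add: type_size_def sum.remove)
  have "?R (c(l := Suc (c l))) = ?R c" by (intro sum.cong) auto
  then show ?thesis unfolding split[of "c(l := Suc (c l))"] split[of c] by simp
qed

lemma type_before_insert_upd_Suc:
  "type_before_insert (d(Suc l := Suc (d (Suc l)))) l = d(l := Suc (d l))"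
  by (auto simp: type_before_insert_def)

lemma type_weight_type_before_insert:
  assumes l: "l < m" and c: "c (Suc l) \<noteq> 0"
  shows "real (insert_positions c l) * type_weight m c
       = real (Suc l * c (Suc l)) * type_weight m (type_before_insert c l)"
proof -
  define d where "d = c(Suc l := c (Suc l) - 1)"
  have cd: "c = d(Suc l := Suc (d (Suc l)))" and d: "Suc (d (Suc l)) = c (Suc l)" "d l = c l"
    using c by (auto simp: d_def)
  have "type_weight m c = real (c (Suc l)) * real (Suc l) * type_weight m d"
    using type_weight_upd_Suc[of "Suc l" m d] l d by (subst cd) simp
  moreover have "type_weight m (type_before_insert c l) =
      (if l = 0 then 1 else real (Suc (c l)) * real l) * type_weight m d"
    using type_weight_upd_Suc[of l m d] type_weight_upd_outside[of l m d] l d(2)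
    by (subst cd, cases "l = 0") (simp_all add: type_before_insert_upd_Suc)
  ultimately show ?thesis by (simp add: insert_positions_def algebra_simps)
qed

lemma type_size_type_before_insert:
  assumes l: "l < m" and c: "c (Suc l) \<noteq> 0"
  shows "type_size m (type_before_insert c l) + 1 = type_size m c"
proof -
  define d where "d = c(Suc l := c (Suc l) - 1)"
  have cd: "c = d(Suc l := Suc (d (Suc l)))"
    using c by (auto simp: d_def)
  have "type_size m c = type_size m d + Suc l"
    using type_size_upd_Suc[of "Suc l" m d] l by (subst cd) simp
  moreover have "type_size m (type_before_insert c l) = type_size m d + l"
    using type_size_upd_Suc[of l m d] type_size_upd_outside[of l m d] l
    by (subst cd, cases "l = 0") (simp_all add: type_before_insert_upd_Suc)
  ultimately show ?thesis by simp
qed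

lemma type_weight_type_before_insert_top:
  assumes "1 \<le> m"
  shows "real (insert_positions c m) * type_weight m c = type_weight m (type_before_insert c m)"
  using assms type_weight_upd_Suc[of m m "c(Suc m := c (Suc m) - 1)"]
    type_weight_upd_outside[of "Suc m" m c]
  by (simp add: type_before_insert_def insert_positions_def algebra_simps)

lemma type_size_type_before_insert_top:
  assumes "1 \<le> m"
  shows "type_size m (type_before_insert c m) = type_size m c + m"
  using assms type_size_upd_Suc[of m m "c(Suc m := c (Suc m) - 1)"]
    type_size_upd_outside[of "Suc m" m c]
  by (simp add: type_before_insert_def)

section \<open>Solving the recurrence\<close>

text \<open>\<open>long_cycle_prob m k\<close> is the probability that a random permutation of \<open>k\<close> points has no
  cycle of length at most \<open>m\<close>; only the recurrence is used here.\<close>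

fun long_cycle_prob :: "nat \<Rightarrow> nat \<Rightarrow> real" where
  "long_cycle_prob m 0 = 1"
| "long_cycle_prob m (Suc k) =
     (real k * long_cycle_prob m k + (if m \<le> k then long_cycle_prob m (k - m) else 0)) / real (Suc k)"

lemma long_cycle_prob_Suc_mult:
  "real (Suc k) * long_cycle_prob m (Suc k) =
     real k * long_cycle_prob m k + (if m \<le> k then long_cycle_prob m (k - m) else 0)"
  by simp

definition weighted_type_count :: "nat \<Rightarrow> nat \<Rightarrow> nat \<Rightarrow> real" where
  "weighted_type_count m k s = (if s \<le> k then fact k * long_cycle_prob m (k - s) else 0)"

lemma weighted_type_count_Suc:
  "weighted_type_count m (Suc k) s = real s * weighted_type_count m k (s - 1)
     + weighted_type_count m k (s + m) + real (k - s) * weighted_type_count m k s"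
proof -
  consider "s \<le> k" | "s = Suc k" | "Suc k < s" by linarith
  then show ?thesis
  proof cases
    case 1
    define j where "j = k - s"
    define D where "D = long_cycle_prob m (Suc j)"
    define X where "X = (if m \<le> j then long_cycle_prob m (j - m) else 0)"
    have k: "k = s + j" and sj: "Suc k - s = Suc j" using 1 by (simp_all add: j_def)
    have shorter: "real s * weighted_type_count m k (s - 1) = fact k * (real s * D)"
    proof (cases "s = 0")
      case False
      then have "s - 1 \<le> k" "k - (s - 1) = Suc j" using 1 by (auto simp: j_def)
      then show ?thesis by (simp add: weighted_type_count_def D_def)
    qed simp
    have longer: "weighted_type_count m k (s + m) = fact k * X"
      by (auto simp: weighted_type_count_def k X_def)
    have same: "real (k - s) * weighted_type_count m k s = fact k * (real j * long_cycle_prob m j)"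
      using 1 by (simp add: weighted_type_count_def j_def)
    have "weighted_type_count m (Suc k) s = fact (Suc k) * D"
      using 1 unfolding weighted_type_count_def D_def sj by simp
    also have "\<dots> = fact k * (real s * D + real (Suc j) * D)"
      by (simp add: k algebra_simps)
    also have "real (Suc j) * D = real j * long_cycle_prob m j + X"
      unfolding D_def X_def by (rule long_cycle_prob_Suc_mult)
    finally show ?thesis
      unfolding shorter longer same by (simp add: algebra_simps)
  qed (auto simp: weighted_type_count_def)
qed

lemma perms_with_short_cycle_counts_empty:
  "real (perms_with_short_cycle_counts m {} c) * type_weight m c = weighted_type_count m 0 (type_size m c)"
proof (cases "\<forall>i\<in>{1..m}. c i = 0")
  case True
  then have "has_short_cycle_counts m {} id c" "type_weight m c = 1" "type_size m c = 0"
    by (simp_all add: has_short_cycle_counts_def cycle_points_def type_weight_def type_size_def)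
  moreover from this have perms: "{p. p permutes {} \<and> has_short_cycle_counts m {} p c} = {id}" by auto
  ultimately show ?thesis
    unfolding perms_with_short_cycle_counts_def perms by (simp add: weighted_type_count_def)
next
  case False
  then have "\<not> has_short_cycle_counts m {} id c" "type_size m c \<noteq> 0"
    by (auto simp: has_short_cycle_counts_def cycle_points_def type_size_def)
  moreover from this have perms: "{p. p permutes {} \<and> has_short_cycle_counts m {} p c} = {}" by auto
  ultimately show ?thesis
    unfolding perms_with_short_cycle_counts_def perms by (simp add: weighted_type_count_def)
qed

lemma weighted_insertion_term_short:
  fixes N :: "(nat \<Rightarrow> nat) \<Rightarrow> nat" and T :: "nat \<Rightarrow> real"
  assumes l: "l < m" and N: "\<And>d. real (N d) * type_weight m d = T (type_size m d)"
  shows "real (insert_positions c l * of_bool (Suc l \<le> m \<longrightarrow> c (Suc l) \<noteq> 0)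
            * N (type_before_insert c l)) * type_weight m c
       = real (Suc l * c (Suc l)) * T (type_size m c - 1)"
proof (cases "c (Suc l) = 0")
  case False
  let ?d = "type_before_insert c l"
  have "real (insert_positions c l * of_bool (Suc l \<le> m \<longrightarrow> c (Suc l) \<noteq> 0) * N ?d) * type_weight m c
      = real (N ?d) * (real (insert_positions c l) * type_weight m c)"
    using l False by simp
  also have "\<dots> = real (Suc l * c (Suc l)) * (real (N ?d) * type_weight m ?d)"
    using type_weight_type_before_insert[of l m c, OF l False] by simp
  also have "\<dots> = real (Suc l * c (Suc l)) * T (type_size m c - 1)"
    using N type_size_type_before_insert[of l m c, OF l False] by (metis add_diff_cancel_right')
  finally show ?thesis .
qed (use l in simp)

lemma weighted_insertion_term_top:
  fixes N :: "(nat \<Rightarrow> nat) \<Rightarrow> nat" and T :: "nat \<Rightarrow> real"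
  assumes m: "1 \<le> m" and N: "\<And>d. real (N d) * type_weight m d = T (type_size m d)"
  shows "real (insert_positions c m * of_bool (Suc m \<le> m \<longrightarrow> c (Suc m) \<noteq> 0)
            * N (type_before_insert c m)) * type_weight m c
       = T (type_size m c + m)"
proof -
  let ?d = "type_before_insert c m"
  have "real (insert_positions c m * of_bool (Suc m \<le> m \<longrightarrow> c (Suc m) \<noteq> 0) * N ?d) * type_weight m c
      = real (N ?d) * (real (insert_positions c m) * type_weight m c)"
    by simp
  also have "\<dots> = real (N ?d) * type_weight m ?d"
    using type_weight_type_before_insert_top[OF m, of c] by simp
  also have "\<dots> = T (type_size m c + m)"
    using N type_size_type_before_insert_top[OF m, of c] by simp
  finally show ?thesis .
qed

lemma perms_with_short_cycle_counts_eq: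
  assumes "finite S" and m: "1 \<le> m"
  shows "real (perms_with_short_cycle_counts m S c) * type_weight m c
       = weighted_type_count m (card S) (type_size m c)"
  using assms(1)
proof (induction S arbitrary: c rule: finite_induct)
  case empty
  show ?case using perms_with_short_cycle_counts_empty by simp
next
  case (insert a S)
  let ?N = "perms_with_short_cycle_counts m S"
  let ?T = "weighted_type_count m (card S)"
  let ?s = "type_size m c"
  let ?term = "\<lambda>l. real (insert_positions c l * of_bool (Suc l \<le> m \<longrightarrow> c (Suc l) \<noteq> 0)
                         * ?N (type_before_insert c l)) * type_weight m c"
  have "(\<Sum>l<m. real (Suc l * c (Suc l))) = real ?s"
    unfolding type_size_def of_nat_sum[symmetric] using sum_bounds_lt_plus1[of "\<lambda>i. i * c i" m] by simp
  then have "(\<Sum>l<m. ?term l) = real ?s * ?T (?s - 1)"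
    using weighted_insertion_term_short[OF _ insert.IH] by (simp add: sum_distrib_right[symmetric])
  moreover have "real (perms_with_short_cycle_counts m (insert a S) c) * type_weight m c
      = (\<Sum>l<m. ?term l) + ?term m + real (card S - ?s) * (real (?N c) * type_weight m c)"
    unfolding perms_with_short_cycle_counts_insert[OF insert.hyps]
    by (simp only: of_nat_add of_nat_mult of_nat_sum distrib_right sum_distrib_right
        lessThan_Suc_atMost[symmetric] sum.lessThan_Suc mult.assoc)
  ultimately show ?case
    using weighted_insertion_term_top[OF m insert.IH] insert.IH[of c] insert.hyps
      weighted_type_count_Suc[of m "card S" ?s]
    by simp
qed

section \<open>Bounds on the probability of having only long cycles\<close>

lemma long_cycle_prob_eq_0: "0 < k \<Longrightarrow> k \<le> m \<Longrightarrow> long_cycle_prob m k = 0"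
  by (induction k) auto

lemma long_cycle_prob_mid:
  "m < k \<Longrightarrow> k \<le> 2 * m + 1 \<Longrightarrow> real k * long_cycle_prob m k = 1"
proof (induction k)
  case (Suc k)
  show ?case
  proof (cases "k = m")
    case True
    then show ?thesis using long_cycle_prob_eq_0[of m m] by (cases "m = 0") simp_all
  next
    case False
    then have "m < k" "k - m \<le> m" "0 < k - m" using Suc.prems by auto
    then show ?thesis using Suc.IH long_cycle_prob_eq_0[of "k - m" m] Suc.prems by simp
  qed
qed simp

lemma long_cycle_prob_le:
  "0 < k \<Longrightarrow> long_cycle_prob m k \<le> 1 / real (m + 1)"
proof (induction k rule: less_induct)
  case (less k)
  then obtain k' where k: "k = Suc k'" using gr0_implies_Suc by blast
  consider "k' < m" | "k' = m" | "m < k'" by linarith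
  then show ?case
  proof cases
    case 1
    have "long_cycle_prob m k = 0" by (rule long_cycle_prob_eq_0) (use 1 k in auto)
    then show ?thesis by simp
  next
    case 2
    then have "real k * long_cycle_prob m k = 1" using long_cycle_prob_mid[of m k] k by simp
    then show ?thesis using k 2 by (simp add: field_simps)
  next
    case 3
    have "real k * long_cycle_prob m k = real k' * long_cycle_prob m k' + long_cycle_prob m (k' - m)"
      using long_cycle_prob_Suc_mult[of k' m] 3 k by simp
    also have "\<dots> \<le> real k' / real (m + 1) + 1 / real (m + 1)"
      using less.IH[of k'] less.IH[of "k' - m"] 3 k
      by (intro add_mono) (simp_all add: mult_left_mono divide_inverse)
    also have "\<dots> = real k * (1 / real (m + 1))"
      using k by (simp add: field_simps)
    finally show ?thesis by (rule mult_left_le_imp_le) (use k in simp)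
  qed
qed

lemma long_cycle_prob_ge:
  "m < k \<Longrightarrow> 1 / real (2 * m + 2) \<le> long_cycle_prob m k"
proof (induction k rule: less_induct)
  case (less k)
  then obtain k' where k: "k = Suc k'" using gr0_implies_Suc by (metis gr_zeroI not_less0)
  show ?case
  proof (cases "k \<le> 2 * m + 1")
    case True
    then have "real k * long_cycle_prob m k = 1" using long_cycle_prob_mid less.prems by blast
    then have "long_cycle_prob m k = 1 / real k"
      using k by (simp add: eq_divide_eq mult.commute del: long_cycle_prob.simps)
    then show ?thesis using True k by (auto intro!: divide_left_mono simp del: long_cycle_prob.simps)
  next
    case False
    have "real k * (1 / real (2 * m + 2)) = real k' / real (2 * m + 2) + 1 / real (2 * m + 2)"
      using k by (simp add: field_simps)
    also have "\<dots> \<le> real k' * long_cycle_prob m k' + long_cycle_prob m (k' - m)"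
      using less.IH[of k'] less.IH[of "k' - m"] False k
      by (intro add_mono) (simp_all add: mult_left_mono divide_inverse)
    also have "\<dots> = real k * long_cycle_prob m k"
      using long_cycle_prob_Suc_mult[of k' m] False k by simp
    finally show ?thesis by (rule mult_left_le_imp_le) (use k in simp)
  qed
qed

lemma cyc_count_iff_cycle_points:
  assumes "p permutes {1..n}" and "1 \<le> i"
  shows "cyc_count n p i = k \<longleftrightarrow> cycle_points {1..n} p i = i * k"
  using card_orbits_of_size[OF assms(1), of i, symmetric] assms(2) by (simp add: cyc_count_def)

lemma sym_prob_short_cycle_counts:
  assumes m: "1 \<le> m" and s: "type_size m c \<le> n"
  shows "sym_prob n (\<lambda>p. \<forall>i\<in>{1..m}. cyc_count n p i = c i)
       = long_cycle_prob m (n - type_size m c) / type_weight m c"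
proof -
  have "{p. p permutes {1..n} \<and> (\<forall>i\<in>{1..m}. cyc_count n p i = c i)}
      = {p. p permutes {1..n} \<and> has_short_cycle_counts m {1..n} p c}"
    using cyc_count_iff_cycle_points by (auto simp: has_short_cycle_counts_def)
  moreover have "card {p. p permutes {1..n}} = fact n"
    by (rule card_permutations) simp_all
  moreover have "real (perms_with_short_cycle_counts m {1..n} c) * type_weight m c
      = fact n * long_cycle_prob m (n - type_size m c)"
    using perms_with_short_cycle_counts_eq[OF _ m, of "{1..n}" c] s
    by (simp add: weighted_type_count_def)
  moreover have "0 < type_weight m c"
    unfolding type_weight_def by (rule prod_pos) auto
  ultimately show ?thesis
    unfolding sym_prob_def perms_with_short_cycle_counts_def by (simp add: field_simps)
qed

theorem proposition2p1:
  fixes m n :: nat and c :: "nat \<Rightarrow> nat"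
  assumes "1 \<le> m" and "m < n"
    and "(\<Sum>i=1..m. i * c i) \<le> n - m - 1"
  shows "1 / (real (2*m+2) * (\<Prod>i=1..m. fact (c i) * real i ^ c i))
           \<le> sym_prob n (\<lambda>p. \<forall>i\<in>{1..m}. cyc_count n p i = c i)
       \<and> sym_prob n (\<lambda>p. \<forall>i\<in>{1..m}. cyc_count n p i = c i)
           \<le> 1 / (real (m+1) * (\<Prod>i=1..m. fact (c i) * real i ^ c i))"
proof -
  let ?d = "long_cycle_prob m (n - type_size m c)"
  have s: "m < n - type_size m c" using assms(2,3) by (simp add: type_size_def)
  have W: "0 < type_weight m c"
    unfolding type_weight_def by (rule prod_pos) auto
  have P: "sym_prob n (\<lambda>p. \<forall>i\<in>{1..m}. cyc_count n p i = c i) = ?d / type_weight m c"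
    using sym_prob_short_cycle_counts[OF assms(1), of c n] s by simp
  have "1 / real (2 * m + 2) \<le> ?d" "?d \<le> 1 / real (m + 1)"
    using long_cycle_prob_ge[OF s] long_cycle_prob_le[of "n - type_size m c" m] s by simp_all
  then show ?thesis
    unfolding P type_weight_def[symmetric] using W
    by (simp add: divide_right_mono flip: divide_divide_eq_left)
qed

end
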